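(* Let $X$ be a Hausdorff $k_\omega$-space, let $Y$ be a Hausdorff topological space, and let $f:X\to Y$ be an injective continuous map. Then $f$ is regular.
   Context: A topological space $X$ is a $k_\omega$-space if there is a countable cover $\mathcal K$ of $X$ by compact subsets that determines the topology of $X$: a set $U\subset X$ is open in $X$ if and only if $U\cap K$ is open in $K$ for every $K\in\mathcal K$. A continuous map $h:X\to Y$ between topological spaces is called regular if for each point $x\in X$ and each neighborhood $U$ of $x$ in $X$ there is a closed subset $F\subset Y$ such that $h^{-1}(F)$ is a closed neighborhood of $x$ with $h^{-1}(F)\subset U$. *)

theory Defs
  imports "HOL-Analysis.Analysis"
begin

definition k_omega_space :: "'a topology \<Rightarrow> bool" where
  "k_omega_space X \<longleftrightarrow>
     (\<exists>\<K>. countable \<K> \<and> (\<forall>K\<in>\<K>. compactin X K) \<and> \<Union>\<K> = topspace X \<and>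
        (\<forall>U. U \<subseteq> topspace X \<longrightarrow>
              (openin X U \<longleftrightarrow> (\<forall>K\<in>\<K>. openin (subtopology X K) (U \<inter> K)))))"

definition nbhd_in :: "'a topology \<Rightarrow> 'a \<Rightarrow> 'a set \<Rightarrow> bool" where
  "nbhd_in X x N \<longleftrightarrow> N \<subseteq> topspace X \<and> (\<exists>V. openin X V \<and> x \<in> V \<and> V \<subseteq> N)"

definition regular_map :: "'a topology \<Rightarrow> 'b topology \<Rightarrow> ('a \<Rightarrow> 'b) \<Rightarrow> bool" where
  "regular_map X Y h \<longleftrightarrow> continuous_map X Y h \<and>
     (\<forall>x\<in>topspace X. \<forall>U. nbhd_in X x U \<longrightarrow>
        (\<exists>F. closedin Y F \<and>
             closedin X {z \<in> topspace X. h z \<in> F} \<and>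
             nbhd_in X x {z \<in> topspace X. h z \<in> F} \<and>
             {z \<in> topspace X. h z \<in> F} \<subseteq> U))"

end

theory Submission
  imports Defs
begin

text \<open>
  Given \<open>x\<close> and a closed set \<open>L\<close> not containing it, write \<open>X\<close> as the union of an increasing
  sequence of compact sets \<open>K n\<close> that determines its topology, with \<open>x \<in> K 0\<close>. Build inductively
  compact sets \<open>x \<in> A 0 \<subseteq> A 1 \<subseteq> \<dots>\<close> with \<open>A n \<subseteq> K n\<close> disjoint from \<open>L\<close>, and open sets
  \<open>W 0 \<subseteq> W 1 \<subseteq> \<dots>\<close> of \<open>Y\<close> whose closures miss \<open>f ` A n\<close>, such that \<open>f ` (L \<inter> K (n+1)) \<subseteq> W (n+1)\<close>
  and \<open>A n\<close> lies in the interior of \<open>A (n+1)\<close> relative to \<open>K (n+1)\<close>. The step uses normality of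
  the compact Hausdorff space \<open>K (n+1)\<close> to enlarge \<open>A n\<close>, and then injectivity of \<open>f\<close>: the
  compact sets \<open>f ` (L \<inter> K (n+1))\<close> and \<open>f ` A (n+1)\<close> are disjoint, hence separated in \<open>Y\<close>.
  The union of the \<open>A n\<close> is open because the \<open>K n\<close> determine the topology, and the complement
  of the union of the \<open>W n\<close> is the required closed set.
\<close>

lemma Hausdorff_space_compact_separation_closure:
  assumes "Hausdorff_space Y" "compactin Y C" "compactin Y D" "disjnt C D"
  shows "\<exists>G. openin Y G \<and> C \<subseteq> G \<and> disjnt (Y closure_of G) D"
proof -
  obtain U V where UV: "openin Y U" "openin Y V" "C \<subseteq> U" "D \<subseteq> V" "disjnt U V"
    using assms Hausdorff_space_compact_sets by metis
  have "Y closure_of U \<subseteq> topspace Y - V"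
  proof (rule closure_of_minimal)
    show "U \<subseteq> topspace Y - V"
      using UV openin_subset by (fastforce simp: disjnt_def)
  qed (use UV in blast)
  then show ?thesis
    using UV by (intro exI[of _ U]) (auto simp: disjnt_def)
qed

lemma compactin_relative_interior_extension:
  assumes X: "Hausdorff_space X" and K: "compactin X K" and A: "compactin X A" "A \<subseteq> K"
    and C: "closedin X C" "disjnt A C"
  shows "\<exists>A'. compactin X A' \<and> A \<subseteq> A' \<and> A' \<subseteq> K \<and> disjnt A' C \<and>
              (\<forall>y\<in>A. \<exists>T. openin X T \<and> y \<in> T \<and> T \<inter> K \<subseteq> A')"
proof -
  let ?S = "subtopology X K"
  have "Hausdorff_space ?S" "compact_space ?S"
    using X K Hausdorff_space_subtopology compact_space_subtopology by blast+
  then have normal: "normal_space ?S"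
    by (simp add: compact_Hausdorff_or_regular_imp_normal_space)
  have "compactin ?S A"
    using A by (simp add: compactin_subtopology)
  then have "closedin ?S A"
    using \<open>Hausdorff_space ?S\<close> compactin_imp_closedin by blast
  moreover have "closedin ?S (C \<inter> K)"
    using C(1) by (auto simp: closedin_subtopology)
  moreover have "disjnt A (C \<inter> K)"
    using C(2) unfolding disjnt_def by blast
  ultimately obtain G where G: "openin ?S G" "A \<subseteq> G" "disjnt (C \<inter> K) (?S closure_of G)"
    using normal[unfolded normal_space] by blast
  define A' where "A' = ?S closure_of G"
  have "compactin ?S A'"
    unfolding A'_def using \<open>compact_space ?S\<close> by (rule closedin_compact_space[OF _ closedin_closure_of])
  then have A': "compactin X A'" "A' \<subseteq> K"
    by (auto simp: compactin_subtopology)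
  have "G \<subseteq> A'"
    unfolding A'_def using G(1) by (intro closure_of_subset openin_subset)
  obtain T where "openin X T" "G = T \<inter> K"
    using G(1) by (auto simp: openin_subtopology)
  then have "\<forall>y\<in>A. \<exists>T. openin X T \<and> y \<in> T \<and> T \<inter> K \<subseteq> A'"
    using \<open>A \<subseteq> G\<close> \<open>G \<subseteq> A'\<close> by blast
  moreover have "disjnt A' C"
    using G(3) \<open>A' \<subseteq> K\<close> unfolding A'_def disjnt_def by blast
  ultimately show ?thesis
    using A' \<open>A \<subseteq> G\<close> \<open>G \<subseteq> A'\<close> by blast
qed

lemma k_omega_space_incseq_compact:
  assumes "k_omega_space X" "x \<in> topspace X"
  obtains K where "\<And>n. compactin X (K n)" "incseq K" "x \<in> K 0" "(\<Union>n. K n) = topspace X"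
    "\<And>U. \<lbrakk>U \<subseteq> topspace X; \<And>n. openin (subtopology X (K n)) (U \<inter> K n)\<rbrakk> \<Longrightarrow> openin X U"
proof -
  obtain \<K> where \<K>: "countable \<K>" "\<forall>K\<in>\<K>. compactin X K" "\<Union>\<K> = topspace X"
    "\<And>U. U \<subseteq> topspace X \<Longrightarrow> (openin X U \<longleftrightarrow> (\<forall>K\<in>\<K>. openin (subtopology X K) (U \<inter> K)))"
    using assms(1) unfolding k_omega_space_def by blast
  have "\<K> \<noteq> {}"
    using \<K>(3) assms(2) by blast
  define g where "g = from_nat_into \<K>"
  have range_g: "range g = \<K>"
    unfolding g_def using \<open>\<K> \<noteq> {}\<close> \<K>(1) by simp
  define K where "K n = insert x (\<Union>(g ` {..n}))" for n
  have compact_g: "compactin X (g i)" for i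
    using range_g \<K>(2) by blast
  show thesis
  proof (rule that[of K])
    show "compactin X (K n)" for n
    proof -
      have "compactin X ({x} \<union> \<Union>(g ` {..n}))"
        using assms(2) compact_g by (intro compactin_Un compactin_Union) auto
      then show ?thesis
        by (simp add: K_def)
    qed
    show "incseq K"
      unfolding K_def by (intro monoI) auto
    show "x \<in> K 0"
      by (simp add: K_def)
    show "(\<Union>n. K n) = topspace X"
    proof
      show "(\<Union>n. K n) \<subseteq> topspace X"
        unfolding K_def using assms(2) \<K>(3) range_g by blast
      show "topspace X \<subseteq> (\<Union>n. K n)"
        unfolding K_def using \<K>(3) range_g by blast
    qed
  next
    fix U
    assume U: "U \<subseteq> topspace X" "\<And>n. openin (subtopology X (K n)) (U \<inter> K n)"
    have "openin (subtopology X (g n)) (U \<inter> g n)" for n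
    proof -
      obtain T where T: "openin X T" "U \<inter> K n = T \<inter> K n"
        using U(2)[of n] unfolding openin_subtopology by blast
      have "g n \<subseteq> K n"
        unfolding K_def by blast
      then have "U \<inter> g n = T \<inter> g n"
        using T(2) by blast
      then show ?thesis
        unfolding openin_subtopology using T(1) by blast
    qed
    then show "openin X U"
      using \<K>(4)[OF U(1)] range_g by blast
  qed
qed

lemma openin_Union_incseq_relative_interiors:
  assumes determines: "\<And>U. \<lbrakk>U \<subseteq> topspace X; \<And>n. openin (subtopology X (K n)) (U \<inter> K n)\<rbrakk> \<Longrightarrow> openin X U"
    and "incseq K" "incseq A" "\<And>n. A n \<subseteq> topspace X"
    and relative_interior: "\<And>n y. y \<in> A n \<Longrightarrow> \<exists>T. openin X T \<and> y \<in> T \<and> T \<inter> K (Suc n) \<subseteq> A (Suc n)"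
  shows "openin X (\<Union>n. A n)"
proof (rule determines)
  show "(\<Union>n. A n) \<subseteq> topspace X"
    using assms(4) by blast
  fix m
  show "openin (subtopology X (K m)) ((\<Union>n. A n) \<inter> K m)"
  proof (subst openin_subopen, intro ballI)
    fix y
    assume "y \<in> (\<Union>n. A n) \<inter> K m"
    then obtain n where "y \<in> A n" "y \<in> K m"
      by blast
    then have "y \<in> A (max n m)"
      using \<open>incseq A\<close> by (meson incseqD max.cobounded1 subsetD)
    then obtain T where T: "openin X T" "y \<in> T" "T \<inter> K (Suc (max n m)) \<subseteq> A (Suc (max n m))"
      using relative_interior by blast
    have "K m \<subseteq> K (Suc (max n m))"
      using \<open>incseq K\<close> by (simp add: incseqD)
    then have "T \<inter> K m \<subseteq> (\<Union>n. A n) \<inter> K m"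
      using T(3) by blast
    moreover have "openin (subtopology X (K m)) (T \<inter> K m)"
      using T(1) by (auto simp: openin_subtopology)
    ultimately show "\<exists>T'. openin (subtopology X (K m)) T' \<and> y \<in> T' \<and> T' \<subseteq> (\<Union>n. A n) \<inter> K m"
      using T(2) \<open>y \<in> K m\<close> by blast
  qed
qed

lemma inj_continuous_map_separation_step:
  assumes X: "Hausdorff_space X" and Y: "Hausdorff_space Y"
    and f: "continuous_map X Y f" "inj_on f (topspace X)"
    and K: "compactin X K" and A: "compactin X A" "A \<subseteq> K" "disjnt A L"
    and L: "closedin X L"
    and W: "openin Y W" "disjnt (f ` A) (Y closure_of W)"
  obtains A' W' where "compactin X A'" "A \<subseteq> A'" "A' \<subseteq> K" "disjnt A' L"
    "openin Y W'" "W \<subseteq> W'" "f ` (L \<inter> K) \<subseteq> W'" "disjnt (f ` A') (Y closure_of W')"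
    "\<forall>y\<in>A. \<exists>T. openin X T \<and> y \<in> T \<and> T \<inter> K \<subseteq> A'"
proof -
  define C where "C = L \<union> {z \<in> topspace X. f z \<in> Y closure_of W}"
  have "closedin X C"
    unfolding C_def using L f(1) by (intro closedin_Un closedin_continuous_map_preimage) auto
  have "disjnt A C"
    using A W(2) unfolding C_def disjnt_def by blast
  obtain A' where A': "compactin X A'" "A \<subseteq> A'" "A' \<subseteq> K" "disjnt A' C"
    "\<forall>y\<in>A. \<exists>T. openin X T \<and> y \<in> T \<and> T \<inter> K \<subseteq> A'"
    using compactin_relative_interior_extension[OF X K A(1,2) \<open>closedin X C\<close> \<open>disjnt A C\<close>]
    by blast
  have "A' \<subseteq> topspace X"
    using A'(1) compactin_subset_topspace by blast
  have "disjnt (f ` (L \<inter> K)) (f ` A')"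
  proof -
    have "L \<inter> K \<subseteq> topspace X"
      using L closedin_subset by blast
    moreover have "disjnt (L \<inter> K) A'"
      using A'(4) unfolding C_def disjnt_def by blast
    ultimately show ?thesis
      using f(2) \<open>A' \<subseteq> topspace X\<close> unfolding disjnt_def by (metis image_empty inj_on_image_Int)
  qed
  moreover have "compactin Y (f ` (L \<inter> K))" "compactin Y (f ` A')"
    using f(1) L K A'(1) by (auto intro: image_compactin closed_Int_compactin)
  ultimately obtain G where G: "openin Y G" "f ` (L \<inter> K) \<subseteq> G" "disjnt (Y closure_of G) (f ` A')"
    using Hausdorff_space_compact_separation_closure[OF Y] by blast
  have "disjnt (f ` A') (Y closure_of W)"
    using A'(4) \<open>A' \<subseteq> topspace X\<close> unfolding C_def disjnt_def by blast
  then have "disjnt (f ` A') (Y closure_of (W \<union> G))"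
    using G(3) unfolding closure_of_Un disjnt_def by blast
  moreover have "disjnt A' L"
    using A'(4) unfolding C_def disjnt_def by blast
  ultimately show thesis
    using that[of A' "W \<union> G"] A' G W(1) by blast
qed

lemma inj_continuous_map_separating_sequences:
  assumes X: "Hausdorff_space X" and Y: "Hausdorff_space Y"
    and f: "continuous_map X Y f" "inj_on f (topspace X)"
    and K: "\<And>n. compactin X (K n)" "incseq K"
    and x: "x \<in> K 0" and L: "closedin X L" "x \<notin> L"
  obtains A W where "\<And>n. compactin X (A n)" "\<And>n. x \<in> A n" "incseq A"
    "\<And>n y. y \<in> A n \<Longrightarrow> \<exists>T. openin X T \<and> y \<in> T \<and> T \<inter> K (Suc n) \<subseteq> A (Suc n)"
    "\<And>n. openin Y (W n)" "incseq W" "\<And>n. f ` (L \<inter> K (Suc n)) \<subseteq> W (Suc n)"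
    "\<And>n. disjnt (f ` A n) (Y closure_of W n)"
proof -
  define P where "P n p \<longleftrightarrow> compactin X (fst p) \<and> fst p \<subseteq> K n \<and> x \<in> fst p \<and> disjnt (fst p) L \<and>
      openin Y (snd p) \<and> disjnt (f ` fst p) (Y closure_of snd p)" for n p
  define Q where "Q n p q \<longleftrightarrow> fst p \<subseteq> fst q \<and> snd p \<subseteq> snd q \<and> f ` (L \<inter> K (Suc n)) \<subseteq> snd q \<and>
      (\<forall>y\<in>fst p. \<exists>T. openin X T \<and> y \<in> T \<and> T \<inter> K (Suc n) \<subseteq> fst q)" for n p q
  have "P 0 ({x}, {})"
    using x L(2) K(1)[of 0] compactin_subset_topspace unfolding P_def disjnt_def by auto
  moreover have "\<exists>q. P (Suc n) q \<and> Q n p q" if "P n p" for n p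
  proof -
    obtain A W where p: "p = (A, W)"
      by fastforce
    have PA: "compactin X A" "A \<subseteq> K n" "disjnt A L" "openin Y W" "disjnt (f ` A) (Y closure_of W)"
      using that unfolding P_def p by auto
    have "A \<subseteq> K (Suc n)"
      using PA(2) K(2) by (auto dest: incseq_SucD)
    obtain A' W' where "compactin X A'" "A \<subseteq> A'" "A' \<subseteq> K (Suc n)" "disjnt A' L"
      "openin Y W'" "W \<subseteq> W'" "f ` (L \<inter> K (Suc n)) \<subseteq> W'" "disjnt (f ` A') (Y closure_of W')"
      "\<forall>y\<in>A. \<exists>T. openin X T \<and> y \<in> T \<and> T \<inter> K (Suc n) \<subseteq> A'"
      by (rule inj_continuous_map_separation_step[OF X Y f K(1) PA(1) \<open>A \<subseteq> K (Suc n)\<close> PA(3) L(1) PA(4,5)])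
    then show ?thesis
      using that unfolding P_def Q_def p by (intro exI[of _ "(A', W')"]) auto
  qed
  ultimately obtain S where S: "\<And>n. P n (S n) \<and> Q n (S n) (S (Suc n))"
    using dependent_nat_choice[of P Q] by blast
  show thesis
    by (rule that[of "fst \<circ> S" "snd \<circ> S"]) (use S in \<open>auto simp: P_def Q_def incseq_Suc_iff\<close>)
qed

lemma inj_continuous_map_closed_preimage_nbhd:
  assumes X: "Hausdorff_space X" and Y: "Hausdorff_space Y"
    and f: "continuous_map X Y f" "inj_on f (topspace X)"
    and K: "\<And>n. compactin X (K n)" "incseq K" "(\<Union>n. K n) = topspace X"
    and determines: "\<And>U. \<lbrakk>U \<subseteq> topspace X; \<And>n. openin (subtopology X (K n)) (U \<inter> K n)\<rbrakk> \<Longrightarrow> openin X U"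
    and x: "x \<in> K 0" and L: "closedin X L" "x \<notin> L"
  obtains F V where "closedin Y F" "openin X V" "x \<in> V" "V \<subseteq> {z \<in> topspace X. f z \<in> F}"
    "disjnt {z \<in> topspace X. f z \<in> F} L"
proof -
  obtain A W where A: "\<And>n. compactin X (A n)" "\<And>n. x \<in> A n" "incseq A"
      "\<And>n y. y \<in> A n \<Longrightarrow> \<exists>T. openin X T \<and> y \<in> T \<and> T \<inter> K (Suc n) \<subseteq> A (Suc n)"
    and W: "\<And>n. openin Y (W n)" "incseq W" "\<And>n. f ` (L \<inter> K (Suc n)) \<subseteq> W (Suc n)"
    and AW: "\<And>n. disjnt (f ` A n) (Y closure_of W n)"
    using inj_continuous_map_separating_sequences[OF X Y f K(1,2) x L] by metis
  define F where "F = topspace Y - (\<Union>n. W n)"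
  define V where "V = (\<Union>n. A n)"
  show thesis
  proof (rule that[of F V])
    show "closedin Y F"
      unfolding F_def using W(1) by blast
    show "openin X V"
      unfolding V_def using A(1) compactin_subset_topspace
      by (intro openin_Union_incseq_relative_interiors[OF determines K(2) A(3)] A(4)) auto
    show "x \<in> V"
      unfolding V_def using A(2) by blast
    show "V \<subseteq> {z \<in> topspace X. f z \<in> F}"
    proof
      fix z
      assume "z \<in> V"
      then obtain n where "z \<in> A n"
        unfolding V_def by blast
      have "f z \<notin> W m" for m
      proof
        assume "f z \<in> W m"
        then have "f z \<in> W (max n m)" and "z \<in> A (max n m)"
          using \<open>z \<in> A n\<close> A(3) W(2) by (meson incseqD max.cobounded1 max.cobounded2 subsetD)+
        moreover have "W (max n m) \<subseteq> Y closure_of W (max n m)"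
          using W(1) by (intro closure_of_subset openin_subset)
        ultimately show False
          using AW[of "max n m"] unfolding disjnt_def by blast
      qed
      moreover have "z \<in> topspace X"
        using \<open>z \<in> A n\<close> A(1) compactin_subset_topspace by blast
      ultimately show "z \<in> {z \<in> topspace X. f z \<in> F}"
        using continuous_map_image_subset_topspace[OF f(1)] unfolding F_def by blast
    qed
    show "disjnt {z \<in> topspace X. f z \<in> F} L"
    proof -
      have False if "z \<in> topspace X" "f z \<in> F" "z \<in> L" for z
      proof -
        have "z \<in> (\<Union>n. K n)"
          using K(3) that(1) by simp
        then obtain n where "z \<in> K n"
          by blast
        then have "f z \<in> W (Suc n)"
          using that(3) K(2) W(3)[of n] by (auto dest: incseq_SucD)
        then show False
          using that(2) unfolding F_def by blast
      qed
      then show ?thesis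
        unfolding disjnt_def by blast
    qed
  qed
qed

theorem proposition1:
  fixes X :: "'a topology" and Y :: "'b topology" and f :: "'a \<Rightarrow> 'b"
  assumes "Hausdorff_space X" and "k_omega_space X"
    and "Hausdorff_space Y"
    and "continuous_map X Y f" and "inj_on f (topspace X)"
  shows "regular_map X Y f"
  unfolding regular_map_def
proof (intro conjI ballI allI impI)
  fix x U
  assume "x \<in> topspace X" "nbhd_in X x U"
  then obtain V0 where V0: "openin X V0" "x \<in> V0" "V0 \<subseteq> U" "U \<subseteq> topspace X"
    unfolding nbhd_in_def by blast
  obtain K where K: "\<And>n. compactin X (K n)" "incseq K" "x \<in> K 0" "(\<Union>n. K n) = topspace X"
    "\<And>U. \<lbrakk>U \<subseteq> topspace X; \<And>n. openin (subtopology X (K n)) (U \<inter> K n)\<rbrakk> \<Longrightarrow> openin X U"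
    using k_omega_space_incseq_compact[OF assms(2) \<open>x \<in> topspace X\<close>] by blast
  have "closedin X (topspace X - V0)" "x \<notin> topspace X - V0"
    using V0(1,2) by auto
  then obtain F V where F: "closedin Y F" "openin X V" "x \<in> V" "V \<subseteq> {z \<in> topspace X. f z \<in> F}"
      "disjnt {z \<in> topspace X. f z \<in> F} (topspace X - V0)"
    using inj_continuous_map_closed_preimage_nbhd[OF assms(1,3,4,5) K(1,2,4,5,3)] by blast
  show "\<exists>F. closedin Y F \<and> closedin X {z \<in> topspace X. f z \<in> F} \<and>
          nbhd_in X x {z \<in> topspace X. f z \<in> F} \<and> {z \<in> topspace X. f z \<in> F} \<subseteq> U"
  proof (intro exI conjI)
    show "closedin X {z \<in> topspace X. f z \<in> F}"
      using closedin_continuous_map_preimage[OF assms(4) F(1)] .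
    show "nbhd_in X x {z \<in> topspace X. f z \<in> F}"
      unfolding nbhd_in_def using F(2-4) by blast
    show "{z \<in> topspace X. f z \<in> F} \<subseteq> U"
      using F(5) V0(3) unfolding disjnt_def by blast
  qed (rule F(1))
qed (rule assms(4))

end
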